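(* Let $\Theta$ be a finite set, let $(A,u)$ be a decision problem and let $P_1,\dots,P_m$ be experiments. Then there exists a weak decomposition $(A_1^*,u_1^* ),\dots,(A_k^*,u_k^* )$ of $(A,u)$ (with finite action sets) such that $$V(P_1,\dots,P_m;(A,u))=\sum_{\ell=1}^k\max_{j=1,\dots,m}V(P_j;(A_\ell^*,u_\ell^* )).$$
   Context: $\Theta$ is a finite set of states. A decision problem is a pair $(A,u)$ with $A$ a finite nonempty action set and $u:\Theta\times A\to\mathbb{R}$; for $\alpha\in\Delta(A)$ write $u(\theta,\alpha)=\sum_a\alpha(a)u(\theta,a)$. An experiment is a map $P:\Theta\to\Delta(Y)$ with $Y$ a finite signal set. Given experiments $P_j:\Theta\to\Delta(Y_j)$, $j=1,\dots,m$, let $\mathbf Y=Y_1\times\cdots\times Y_m$ and let $\mathcal P(P_1,\dots,P_m)$ be the set of experiments $P:\Theta\to\Delta(\mathbf Y)$ whose $j$-th marginal is $P_j(\cdot|\theta)$ for every $\theta$ and $j$. A strategy is a map $\sigma:\mathbf Y\to\Delta(A)$. Define $V(P_1,\dots,P_m;(A,u))=\max_{\sigma}\min_{P\in\mathcal P(P_1,\dots,P_m)}\sum_{\theta}\sum_{\mathbf y}P(\mathbf y|\theta)u(\theta,\sigma(\mathbf y))$; for a single experiment, $V(P;(A,u))=\max_{\sigma:Y\to\Delta(A)}\sum_\theta\sum_y P(y|\theta)u(\theta,\sigma(y))$. The composition $\bigoplus_{\ell=1}^k(A_\ell,u_\ell)$ is the decision problem with action set $A_1\times\cdots\times A_k$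 and utility $u(\theta,(a_1,\dots,a_k))=\sum_\ell u_\ell(\theta,a_\ell)$. For a decision problem let $\mathcal H(A,u)=\mathrm{co}\{u(\cdot,a):a\in A\}-\mathbb{R}_+^{\Theta}$ (Minkowski difference). A decision problem $(A,u)$ admits a weak decomposition $\{(A_\ell,u_\ell)\}_{\ell=1}^k$ if $\mathcal H(\bigoplus_{\ell=1}^k(A_\ell,u_\ell))\subseteq\mathcal H(A,u)$. *)

theory Defs
  imports "HOL-Analysis.Analysis"
begin

definition is_dist :: "'b set \<Rightarrow> ('b \<Rightarrow> real) \<Rightarrow> bool" where
  "is_dist S p \<longleftrightarrow> (\<forall>x. 0 \<le> p x) \<and> (\<forall>x. x \<notin> S \<longrightarrow> p x = 0) \<and> sum p S = 1"

definition is_experiment :: "'y set \<Rightarrow> ('th \<Rightarrow> 'y \<Rightarrow> real) \<Rightarrow> bool" where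
  "is_experiment Y P \<longleftrightarrow> finite Y \<and> (\<forall>th. is_dist Y (P th))"

definition decision_problem :: "'a set \<Rightarrow> bool" where
  "decision_problem A \<longleftrightarrow> finite A \<and> A \<noteq> {}"

definition exp_util :: "'a set \<Rightarrow> ('th \<Rightarrow> 'a \<Rightarrow> real) \<Rightarrow> 'th \<Rightarrow> ('a \<Rightarrow> real) \<Rightarrow> real" where
  "exp_util A u th alpha = (\<Sum>a\<in>A. alpha a * u th a)"

definition profiles :: "nat \<Rightarrow> (nat \<Rightarrow> 'y set) \<Rightarrow> (nat \<Rightarrow> 'y) set" where
  "profiles m Y = PiE {..<m} Y"

definition couplings :: "nat \<Rightarrow> (nat \<Rightarrow> 'y set) \<Rightarrow> (nat \<Rightarrow> 'th \<Rightarrow> 'y \<Rightarrow> real)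
    \<Rightarrow> ('th \<Rightarrow> (nat \<Rightarrow> 'y) \<Rightarrow> real) set" where
  "couplings m Y Pj = {P. \<forall>th. is_dist (profiles m Y) (P th) \<and>
      (\<forall>j<m. \<forall>y. (\<Sum>ys\<in>{ys\<in>profiles m Y. ys j = y}. P th ys) = Pj j th y)}"

definition strategies :: "'s set \<Rightarrow> 'a set \<Rightarrow> ('s \<Rightarrow> 'a \<Rightarrow> real) set" where
  "strategies S A = {sigma. \<forall>s\<in>S. is_dist A (sigma s)}"

definition Vjoint :: "'a set \<Rightarrow> ('th::finite \<Rightarrow> 'a \<Rightarrow> real) \<Rightarrow> nat \<Rightarrow> (nat \<Rightarrow> 'y set)
    \<Rightarrow> (nat \<Rightarrow> 'th \<Rightarrow> 'y \<Rightarrow> real) \<Rightarrow> real" where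
  "Vjoint A u m Y Pj = (SUP sigma\<in>strategies (profiles m Y) A.
      INF P\<in>couplings m Y Pj.
        (\<Sum>th\<in>UNIV. \<Sum>ys\<in>profiles m Y. P th ys * exp_util A u th (sigma ys)))"

definition Vsingle :: "'a set \<Rightarrow> ('th::finite \<Rightarrow> 'a \<Rightarrow> real) \<Rightarrow> 'y set
    \<Rightarrow> ('th \<Rightarrow> 'y \<Rightarrow> real) \<Rightarrow> real" where
  "Vsingle A u Y P = (SUP sigma\<in>strategies Y A.
        (\<Sum>th\<in>UNIV. \<Sum>y\<in>Y. P th y * exp_util A u th (sigma y)))"

definition Hset :: "'a set \<Rightarrow> ('th::finite \<Rightarrow> 'a \<Rightarrow> real) \<Rightarrow> (real^'th) set" where
  "Hset A u = {y - z | y z. y \<in> convex hull ((\<lambda>a. \<chi> th. u th a) ` A) \<and> (\<forall>th. 0 \<le> z $ th)}"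

definition comp_actions :: "nat \<Rightarrow> (nat \<Rightarrow> 'b set) \<Rightarrow> (nat \<Rightarrow> 'b) set" where
  "comp_actions k Ac = PiE {..<k} Ac"

definition comp_util :: "nat \<Rightarrow> (nat \<Rightarrow> 'th \<Rightarrow> 'b \<Rightarrow> real) \<Rightarrow> 'th \<Rightarrow> (nat \<Rightarrow> 'b) \<Rightarrow> real" where
  "comp_util k uc th a = (\<Sum>l<k. uc l th (a l))"

definition weak_decomposition :: "'a set \<Rightarrow> ('th::finite \<Rightarrow> 'a \<Rightarrow> real) \<Rightarrow> nat
    \<Rightarrow> (nat \<Rightarrow> 'b set) \<Rightarrow> (nat \<Rightarrow> 'th \<Rightarrow> 'b \<Rightarrow> real) \<Rightarrow> bool" where
  "weak_decomposition A u k Ac uc \<longleftrightarrow> (\<forall>l<k. decision_problem (Ac l)) \<and>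
     Hset (comp_actions k Ac) (comp_util k uc) \<subseteq> Hset A u"

end

theory Submission
  imports Defs
begin

text \<open>
  The joint value is the value of a linear programme: a strategy on signal profiles has to
  perform well against every coupling of the experiments. Its dual, obtained from Farkas' lemma
  (proved by Fourier--Motzkin elimination), yields payoffs \<open>w\<^sub>j(\<theta>, y\<^sub>j)\<close> on the single experiments and a
  strategy \<open>\<sigma>\<close> with \<open>\<Sum>\<^sub>j w\<^sub>j(\<theta>, y\<^sub>j) \<le> u(\<theta>, \<sigma>(y))\<close> for every profile \<open>y\<close>, such that \<open>V \<le> \<Sum>\<^sub>j E\<^bsub>P\<^sub>j\<^esub> w\<^sub>j\<close>;
  the normalised multipliers of the domination constraints are precisely a coupling. Reading
  the signals of experiment \<open>j\<close> as actions turns \<open>w\<^sub>j\<close> into a decision problem \<open>(A\<^sub>j, u\<^sub>j)\<close> with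
  \<open>V(P\<^sub>j; A\<^sub>j, u\<^sub>j) \<ge> E\<^bsub>P\<^sub>j\<^esub> w\<^sub>j\<close>, and the composition of these problems is dominated by \<open>(A, u)\<close>, so they
  form a weak decomposition.

  Conversely, for every weak decomposition, answering in each component with an almost optimal
  strategy for its best experiment and dominating the resulting payoff vector by a mixed action
  of \<open>A\<close> (possible because \<open>H\<close> of the composition lies in \<open>H(A, u)\<close>) guarantees
  \<open>\<Sum>\<^sub>l max\<^sub>j V(P\<^sub>j; A\<^sub>l, u\<^sub>l)\<close> against every coupling.
\<close>

section \<open>Farkas' lemma\<close>

lemma one_variable_feasible:
  fixes c s :: "'k \<Rightarrow> real"
  assumes "finite K"
    and zero: "\<And>k. k \<in> K \<Longrightarrow> c k = 0 \<Longrightarrow> 0 \<le> s k"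
    and pos_neg: "\<And>p n. p \<in> K \<Longrightarrow> n \<in> K \<Longrightarrow> 0 < c p \<Longrightarrow> c n < 0 \<Longrightarrow> c n * s p \<le> c p * s n"
  shows "\<exists>t. \<forall>k\<in>K. c k * t \<le> s k"
proof -
  define Kp where "Kp = {k\<in>K. 0 < c k}"
  define Kn where "Kn = {k\<in>K. c k < 0}"
  define bound where "bound = (\<lambda>k. s k / c k)"
  have fin: "finite Kp" "finite Kn" using assms(1) by (auto simp: Kp_def Kn_def)
  define t where "t = (if Kp = {} then Max (insert 0 (bound ` Kn)) else Min (bound ` Kp))"
  have upper: "t \<le> bound p" if "p \<in> Kp" for p
    using that fin by (auto simp: t_def)
  have lower: "c n * t \<le> s n" if "n \<in> Kn" for n
  proof (cases "Kp = {}")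
    case True
    then have "bound n \<le> t" using that fin by (auto simp: t_def)
    then show ?thesis using that by (simp add: Kn_def bound_def divide_le_eq mult.commute)
  next
    case False
    then have "t \<in> bound ` Kp" using fin by (simp add: t_def)
    then obtain p where p: "p \<in> Kp" "c p * t = s p" by (auto simp: Kp_def bound_def)
    have "c p * (c n * t) = c n * s p" using p(2) by (simp add: algebra_simps)
    also have "\<dots> \<le> c p * s n" using pos_neg[of p n] p(1) that by (simp add: Kp_def Kn_def)
    finally show ?thesis using p(1) by (simp add: Kp_def)
  qed
  have "c k * t \<le> s k" if "k \<in> K" for k
  proof (cases "c k" "0::real" rule: linorder_cases)
    case less
    then show ?thesis using lower[of k] that by (simp add: Kn_def)
  next
    case equal
    then show ?thesis using zero that by simp
  next
    case greater
    then show ?thesis using upper[of k] that by (simp add: Kp_def bound_def le_divide_eq mult.commute)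
  qed
  then show ?thesis by blast
qed

text \<open>
  Fourier--Motzkin elimination of a variable with coefficients \<open>c\<close>: a row \<open>k\<close> with \<open>c k = 0\<close> is kept
  as the pair \<open>(k, k)\<close>, and a row \<open>p\<close> with \<open>c p > 0\<close> is combined with a row \<open>n\<close> with \<open>c n < 0\<close>,
  using the positive weights \<open>c p\<close> and \<open>- c n\<close>, into a row in which the variable cancels.
\<close>

definition fm_rows :: "('k \<Rightarrow> real) \<Rightarrow> 'k set \<Rightarrow> ('k \<times> 'k) set" where
  "fm_rows c K = (\<lambda>k. (k, k)) ` {k\<in>K. c k = 0} \<union> {p\<in>K. 0 < c p} \<times> {n\<in>K. c n < 0}"

definition fm_comb :: "('k \<Rightarrow> real) \<Rightarrow> ('k \<Rightarrow> real) \<Rightarrow> 'k \<times> 'k \<Rightarrow> real" where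
  "fm_comb c f = (\<lambda>(p, n). if p = n then f p else c p * f n - c n * f p)"

lemma finite_fm_rows: "finite K \<Longrightarrow> finite (fm_rows c K)"
  by (simp add: fm_rows_def)

lemma fm_comb_eliminates: "\<rho> \<in> fm_rows c K \<Longrightarrow> fm_comb c c \<rho> = 0"
  by (auto simp: fm_rows_def fm_comb_def)

lemma fm_comb_affine:
  "fm_comb c (\<lambda>k. f k - (\<Sum>i\<in>I. g k i * x i)) \<rho> = fm_comb c f \<rho> - (\<Sum>i\<in>I. fm_comb c (\<lambda>k. g k i) \<rho> * x i)"
  by (cases \<rho>) (simp add: fm_comb_def algebra_simps sum_subtractf sum_distrib_left)

lemma fm_comb_weights:
  assumes "finite K" "\<rho> \<in> fm_rows c K"
  shows "(\<Sum>k\<in>K. f k * fm_comb c (\<lambda>k'. if k' = k then 1 else 0) \<rho>) = fm_comb c f \<rho>"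
    and "0 \<le> fm_comb c (\<lambda>k'. if k' = k then 1 else 0) \<rho>"
proof -
  obtain p n where \<rho>: "\<rho> = (p, n)" "p \<in> K" "n \<in> K" using assms(2) by (auto simp: fm_rows_def)
  then show "(\<Sum>k\<in>K. f k * fm_comb c (\<lambda>k'. if k' = k then 1 else 0) \<rho>) = fm_comb c f \<rho>"
    using assms(1) by (simp add: fm_comb_def algebra_simps sum_subtractf sum_distrib_left
        if_distrib[of "\<lambda>z. _ * z"] cong: if_cong)
  show "0 \<le> fm_comb c (\<lambda>k'. if k' = k then 1 else 0) \<rho>"
    using assms(2) by (auto simp: fm_rows_def fm_comb_def)
qed

lemma fm_rows_feasible:
  assumes "finite K" "\<forall>\<rho>\<in>fm_rows c K. 0 \<le> fm_comb c s \<rho>"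
  shows "\<exists>t. \<forall>k\<in>K. c k * t \<le> s k"
proof (rule one_variable_feasible[OF assms(1)])
  show "0 \<le> s k" if "k \<in> K" "c k = 0" for k
    using assms(2)[rule_format, of "(k, k)"] that by (auto simp: fm_rows_def fm_comb_def)
  show "c n * s p \<le> c p * s n" if "p \<in> K" "n \<in> K" "0 < c p" "c n < 0" for p n
    using assms(2)[rule_format, of "(p, n)"] that by (auto simp: fm_rows_def fm_comb_def split: if_splits)
qed

lemma fm_rows_lift:
  assumes "finite K" "finite I" "i0 \<notin> I"
    and "\<forall>\<rho>\<in>fm_rows (\<lambda>k. a k i0) K.
      (\<Sum>i\<in>I. fm_comb (\<lambda>k. a k i0) (\<lambda>k. a k i) \<rho> * x i) \<le> fm_comb (\<lambda>k. a k i0) b \<rho>"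
  shows "\<exists>t. \<forall>k\<in>K. (\<Sum>i\<in>insert i0 I. a k i * (x(i0 := t)) i) \<le> b k"
proof -
  have "\<forall>\<rho>\<in>fm_rows (\<lambda>k. a k i0) K. 0 \<le> fm_comb (\<lambda>k. a k i0) (\<lambda>k. b k - (\<Sum>i\<in>I. a k i * x i)) \<rho>"
    using assms(4) by (simp add: fm_comb_affine)
  then obtain t where t: "\<forall>k\<in>K. a k i0 * t \<le> b k - (\<Sum>i\<in>I. a k i * x i)"
    using fm_rows_feasible[OF assms(1)] by blast
  have "(\<Sum>i\<in>insert i0 I. a k i * (x(i0 := t)) i) = a k i0 * t + (\<Sum>i\<in>I. a k i * x i)" for k
    using assms(2,3) by (auto intro!: sum.cong)
  then show ?thesis using t by (intro exI[of _ t] ballI) (simp add: le_diff_eq del: fun_upd_apply)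
qed

lemma sum_fm_multipliers:
  assumes "finite K"
  shows "(\<Sum>k\<in>K. (\<Sum>\<rho>\<in>fm_rows c K. z \<rho> * fm_comb c (\<lambda>k'. if k' = k then 1 else 0) \<rho>) * f k)
    = (\<Sum>\<rho>\<in>fm_rows c K. z \<rho> * fm_comb c f \<rho>)"
proof -
  have "(\<Sum>k\<in>K. (\<Sum>\<rho>\<in>fm_rows c K. z \<rho> * fm_comb c (\<lambda>k'. if k' = k then 1 else 0) \<rho>) * f k)
      = (\<Sum>\<rho>\<in>fm_rows c K. z \<rho> * (\<Sum>k\<in>K. f k * fm_comb c (\<lambda>k'. if k' = k then 1 else 0) \<rho>))"
    by (simp add: sum_distrib_left sum_distrib_right sum.swap[of _ K] algebra_simps)
  then show ?thesis using assms by (simp add: fm_comb_weights(1))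
qed

lemma farkas_nat:
  fixes a :: "nat \<Rightarrow> 'i \<Rightarrow> real" and b :: "nat \<Rightarrow> real"
  assumes "finite I" "finite K" "\<not> (\<exists>x. \<forall>k\<in>K. (\<Sum>i\<in>I. a k i * x i) \<le> b k)"
  shows "\<exists>y. (\<forall>k\<in>K. 0 \<le> y k) \<and> (\<forall>i\<in>I. (\<Sum>k\<in>K. y k * a k i) = 0) \<and> (\<Sum>k\<in>K. y k * b k) < 0"
  using assms
proof (induction I arbitrary: K a b rule: finite_induct)
  case empty
  then obtain k0 where k0: "k0 \<in> K" "b k0 < 0" by (auto simp: not_le)
  have "(\<Sum>k\<in>K. (if k = k0 then 1 else 0) * b k) = b k0"
    using empty.prems(1) k0(1) by (simp add: if_distrib[of "\<lambda>z. z * _"] cong: if_cong)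
  then show ?case using k0 by (intro exI[of _ "\<lambda>k. if k = k0 then 1 else 0"]) auto
next
  case (insert i0 I)
  define c where "c = (\<lambda>k. a k i0)"
  define R where "R = fm_rows c K"
  \<comment> \<open>Rows of the eliminated system are pairs of rows, encoded as naturals so that
    the induction hypothesis applies.\<close>
  define K' where "K' = prod_encode ` R"
  have reindex: "(\<Sum>r\<in>K'. f r) = (\<Sum>\<rho>\<in>R. f (prod_encode \<rho>))" for f :: "nat \<Rightarrow> real"
    unfolding K'_def by (simp add: sum.reindex inj_prod_encode)
  have reduced_infeasible:
    "\<not> (\<exists>x. \<forall>r\<in>K'. (\<Sum>i\<in>I. fm_comb c (\<lambda>k. a k i) (prod_decode r) * x i) \<le> fm_comb c b (prod_decode r))"
  proof
    assume "\<exists>x. \<forall>r\<in>K'. (\<Sum>i\<in>I. fm_comb c (\<lambda>k. a k i) (prod_decode r) * x i) \<le> fm_comb c b (prod_decode r)"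
    then obtain x where "\<forall>\<rho>\<in>fm_rows c K. (\<Sum>i\<in>I. fm_comb c (\<lambda>k. a k i) \<rho> * x i) \<le> fm_comb c b \<rho>"
      by (auto simp: K'_def R_def)
    from fm_rows_lift[OF insert.prems(1) insert.hyps this[unfolded c_def]]
    obtain t where "\<forall>k\<in>K. (\<Sum>i\<in>insert i0 I. a k i * (x(i0 := t)) i) \<le> b k" ..
    with insert.prems(2) show False by blast
  qed
  have "finite K'" using insert.prems(1) by (simp add: K'_def R_def finite_fm_rows)
  then obtain y' where y': "\<forall>r\<in>K'. 0 \<le> y' r"
      "\<forall>i\<in>I. (\<Sum>r\<in>K'. y' r * fm_comb c (\<lambda>k. a k i) (prod_decode r)) = 0"
      "(\<Sum>r\<in>K'. y' r * fm_comb c b (prod_decode r)) < 0"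
    using insert.IH[OF _ reduced_infeasible] by metis
  define y where "y = (\<lambda>k. \<Sum>\<rho>\<in>R. y' (prod_encode \<rho>) * fm_comb c (\<lambda>k'. if k' = k then 1 else 0) \<rho>)"
  have combine: "(\<Sum>k\<in>K. y k * f k) = (\<Sum>r\<in>K'. y' r * fm_comb c f (prod_decode r))" for f
    unfolding reindex y_def R_def using sum_fm_multipliers[OF insert.prems(1)] by simp
  show ?case
  proof (intro exI[of _ y] conjI ballI)
    show "0 \<le> y k" for k
      unfolding y_def using y'(1) insert.prems(1)
      by (auto simp: K'_def R_def fm_comb_weights(2) intro!: sum_nonneg)
    show "(\<Sum>k\<in>K. y k * a k i) = 0" if "i \<in> insert i0 I" for i
    proof (cases "i = i0")
      case True
      then show ?thesis unfolding combine reindex by (simp add: R_def fm_comb_eliminates flip: c_def)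
    qed (use that y'(2) combine in auto)
    show "(\<Sum>k\<in>K. y k * b k) < 0" unfolding combine by (rule y'(3))
  qed
qed

lemma farkas:
  fixes a :: "'k \<Rightarrow> 'i \<Rightarrow> real" and b :: "'k \<Rightarrow> real"
  assumes "finite I" "finite K" "\<not> (\<exists>x. \<forall>k\<in>K. (\<Sum>i\<in>I. a k i * x i) \<le> b k)"
  shows "\<exists>y. (\<forall>k\<in>K. 0 \<le> y k) \<and> (\<forall>i\<in>I. (\<Sum>k\<in>K. y k * a k i) = 0) \<and> (\<Sum>k\<in>K. y k * b k) < 0"
proof -
  obtain h N where h: "bij_betw h N K" and N: "N = {0..<card K}"
    using ex_bij_betw_nat_finite[OF assms(2)] by blast
  then have K: "K = h ` N" by (simp add: bij_betw_def)
  have infeasible: "\<not> (\<exists>x. \<forall>n\<in>N. (\<Sum>i\<in>I. a (h n) i * x i) \<le> b (h n))"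
    using assms(3) unfolding K by simp
  have "finite N" using N by simp
  obtain y where y: "\<forall>n\<in>N. 0 \<le> y n"
      "\<forall>i\<in>I. (\<Sum>n\<in>N. y n * a (h n) i) = 0" "(\<Sum>n\<in>N. y n * b (h n)) < 0"
    using farkas_nat[OF assms(1) \<open>finite N\<close> infeasible] by blast
  define g where "g = inv_into N h"
  have g: "g k \<in> N" "h (g k) = k" if "k \<in> K" for k
    using h that by (auto simp: g_def bij_betw_def inv_into_into f_inv_into_f)
  have reindex: "(\<Sum>k\<in>K. y (g k) * f k) = (\<Sum>n\<in>N. y n * f (h n))" for f
    using h by (auto simp: sum.reindex_bij_betw[symmetric] g_def bij_betw_def intro!: sum.cong)
  show ?thesis
    using y g by (intro exI[of _ "y \<circ> g"]) (auto simp: reindex)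
qed

definition linear_form_on :: "'i set \<Rightarrow> (('i \<Rightarrow> real) \<Rightarrow> real) \<Rightarrow> bool" where
  "linear_form_on I f \<longleftrightarrow> (\<exists>c. \<forall>x. f x = (\<Sum>i\<in>I. c i * x i))"

lemma linear_form_on_coordinate: "finite I \<Longrightarrow> i \<in> I \<Longrightarrow> linear_form_on I (\<lambda>x. x i)"
  unfolding linear_form_on_def
  by (intro exI[of _ "\<lambda>j. if j = i then 1 else 0"]) (simp add: if_distrib[of "\<lambda>z. z * _"] cong: if_cong)

lemma linear_form_on_add:
  assumes "linear_form_on I f" "linear_form_on I g"
  shows "linear_form_on I (\<lambda>x. f x + g x)"
proof -
  obtain c d where "\<forall>x. f x = (\<Sum>i\<in>I. c i * x i)" "\<forall>x. g x = (\<Sum>i\<in>I. d i * x i)"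
    using assms unfolding linear_form_on_def by blast
  then show ?thesis unfolding linear_form_on_def
    by (intro exI[of _ "\<lambda>i. c i + d i"]) (simp add: distrib_right sum.distrib)
qed

lemma linear_form_on_scale:
  assumes "linear_form_on I f"
  shows "linear_form_on I (\<lambda>x. r * f x)"
proof -
  obtain c where "\<forall>x. f x = (\<Sum>i\<in>I. c i * x i)"
    using assms unfolding linear_form_on_def by blast
  then show ?thesis unfolding linear_form_on_def
    by (intro exI[of _ "\<lambda>i. r * c i"]) (simp add: sum_distrib_left mult.assoc)
qed

lemma linear_form_on_scale_right: "linear_form_on I f \<Longrightarrow> linear_form_on I (\<lambda>x. f x * r)"
  using linear_form_on_scale[of I f r] by (simp add: mult.commute)

lemma linear_form_on_minus: "linear_form_on I f \<Longrightarrow> linear_form_on I (\<lambda>x. - f x)"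
  using linear_form_on_scale[of I f "-1"] by simp

lemma linear_form_on_diff: "linear_form_on I f \<Longrightarrow> linear_form_on I g \<Longrightarrow> linear_form_on I (\<lambda>x. f x - g x)"
  using linear_form_on_add[of I f "\<lambda>x. - g x"] linear_form_on_minus[of I g] by simp

lemma linear_form_on_sum:
  "finite J \<Longrightarrow> (\<And>j. j \<in> J \<Longrightarrow> linear_form_on I (f j)) \<Longrightarrow> linear_form_on I (\<lambda>x. \<Sum>j\<in>J. f j x)"
proof (induction J rule: finite_induct)
  case empty
  then show ?case unfolding linear_form_on_def by (intro exI[of _ "\<lambda>i. 0"]) simp
next
  case (insert j J)
  then show ?case using linear_form_on_add[of I "f j" "\<lambda>x. \<Sum>j\<in>J. f j x"] by simp
qed

lemma farkas_linear_forms: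
  fixes g :: "'k \<Rightarrow> ('i \<Rightarrow> real) \<Rightarrow> real" and b :: "'k \<Rightarrow> real"
  assumes "finite I" "finite K" "\<forall>k\<in>K. linear_form_on I (g k)" "\<not> (\<exists>x. \<forall>k\<in>K. g k x \<le> b k)"
  shows "\<exists>y. (\<forall>k\<in>K. 0 \<le> y k) \<and> (\<forall>x. (\<Sum>k\<in>K. y k * g k x) = 0) \<and> (\<Sum>k\<in>K. y k * b k) < 0"
proof -
  obtain c where c: "\<forall>k\<in>K. \<forall>x. g k x = (\<Sum>i\<in>I. c k i * x i)"
    using bchoice[OF assms(3)[unfolded linear_form_on_def]] by blast
  have "\<not> (\<exists>x. \<forall>k\<in>K. (\<Sum>i\<in>I. c k i * x i) \<le> b k)"
    using assms(4) c by simp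
  then obtain y where y: "\<forall>k\<in>K. 0 \<le> y k" "\<forall>i\<in>I. (\<Sum>k\<in>K. y k * c k i) = 0" "(\<Sum>k\<in>K. y k * b k) < 0"
    using farkas[OF assms(1,2)] by blast
  have "(\<Sum>k\<in>K. y k * g k x) = (\<Sum>i\<in>I. (\<Sum>k\<in>K. y k * c k i) * x i)" for x
    using c by (simp add: sum_distrib_left sum_distrib_right sum.swap[of _ K] mult.assoc)
  then show ?thesis using y by auto
qed

section \<open>Couplings and dominated payoff vectors\<close>

lemma is_dist_nonempty: "is_dist S p \<Longrightarrow> S \<noteq> {}"
  unfolding is_dist_def by auto

lemma exp_util_abs_le:
  assumes "finite A" "is_dist A \<alpha>"
  shows "\<bar>exp_util A u th \<alpha>\<bar> \<le> (\<Sum>a\<in>A. \<bar>u th a\<bar>)"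
proof -
  have "\<alpha> a \<le> 1" if "a \<in> A" for a
    using assms member_le_sum[of a A \<alpha>] that by (auto simp: is_dist_def)
  then have "\<bar>\<alpha> a * u th a\<bar> \<le> \<bar>u th a\<bar>" if "a \<in> A" for a
    using assms(2) that by (simp add: is_dist_def abs_mult mult_left_le_one_le)
  then show ?thesis
    unfolding exp_util_def by (intro order_trans[OF sum_abs] sum_mono)
qed

lemma expectation_abs_le:
  assumes "finite S" "is_dist S p" "\<And>s. s \<in> S \<Longrightarrow> \<bar>f s\<bar> \<le> M"
  shows "\<bar>\<Sum>s\<in>S. p s * f s\<bar> \<le> M"
proof -
  have "\<bar>\<Sum>s\<in>S. p s * f s\<bar> \<le> (\<Sum>s\<in>S. p s * M)"
    using assms by (intro order_trans[OF sum_abs] sum_mono)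
      (auto simp: is_dist_def abs_mult intro: mult_left_mono)
  also have "\<dots> = M" using assms(2) by (simp add: is_dist_def flip: sum_distrib_right)
  finally show ?thesis .
qed

lemma finite_profiles: "(\<And>j. j < m \<Longrightarrow> finite (Y j)) \<Longrightarrow> finite (profiles m Y)"
  unfolding profiles_def by (rule finite_PiE) auto

lemma profiles_memD: "ys \<in> profiles m Y \<Longrightarrow> j < m \<Longrightarrow> ys j \<in> Y j"
  unfolding profiles_def by auto

lemma profiles_fix:
  assumes "j < m" "y \<in> Y j"
  shows "{ys \<in> profiles m Y. ys j = y} = profiles m (Y(j := {y}))"
  using assms unfolding profiles_def PiE_def Pi_def by auto

lemma coupling_is_dist: "P \<in> couplings m Y Pj \<Longrightarrow> is_dist (profiles m Y) (P th)"
  unfolding couplings_def by blast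

lemma sum_profiles_group:
  assumes "j < m" "\<And>j. j < m \<Longrightarrow> finite (Y j)"
  shows "(\<Sum>ys\<in>profiles m Y. f ys) = (\<Sum>y\<in>Y j. \<Sum>ys\<in>{ys \<in> profiles m Y. ys j = y}. f ys)"
  using assms profiles_memD
  by (subst sum.group[symmetric, where g = "\<lambda>ys. ys j"]) (auto intro!: finite_profiles)

lemma coupling_expectation:
  assumes P: "P \<in> couplings m Y Pj" and "j < m" and fin: "\<And>j. j < m \<Longrightarrow> finite (Y j)"
  shows "(\<Sum>ys\<in>profiles m Y. P th ys * g (ys j)) = (\<Sum>y\<in>Y j. Pj j th y * g y)"
proof -
  have "(\<Sum>ys\<in>profiles m Y. P th ys * g (ys j))
      = (\<Sum>y\<in>Y j. \<Sum>ys\<in>{ys \<in> profiles m Y. ys j = y}. P th ys * g y)"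
    by (subst sum_profiles_group[OF \<open>j < m\<close> fin]) (auto intro!: sum.cong)
  also have "\<dots> = (\<Sum>y\<in>Y j. Pj j th y * g y)"
    using P \<open>j < m\<close> by (simp add: couplings_def flip: sum_distrib_right)
  finally show ?thesis .
qed

lemma couplingI:
  assumes "m \<ge> 1" and exps: "\<forall>j<m. is_experiment (Y j) (Pj j)"
    and nonneg: "\<And>th ys. 0 \<le> P th ys" and support: "\<And>th ys. ys \<notin> profiles m Y \<Longrightarrow> P th ys = 0"
    and marg: "\<And>j th y. j < m \<Longrightarrow> y \<in> Y j \<Longrightarrow> (\<Sum>ys\<in>{ys \<in> profiles m Y. ys j = y}. P th ys) = Pj j th y"
  shows "P \<in> couplings m Y Pj"
proof -
  have fin: "\<And>j. j < m \<Longrightarrow> finite (Y j)" using exps by (simp add: is_experiment_def)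
  have marg': "(\<Sum>ys\<in>{ys \<in> profiles m Y. ys j = y}. P th ys) = Pj j th y" if "j < m" for j th y
  proof (cases "y \<in> Y j")
    case False
    then have "{ys \<in> profiles m Y. ys j = y} = {}" using \<open>j < m\<close> profiles_memD by blast
    moreover have "Pj j th y = 0" using exps \<open>j < m\<close> False by (simp add: is_experiment_def is_dist_def)
    ultimately show ?thesis by (metis sum.empty)
  qed (use marg that in blast)
  have "sum (P th) (profiles m Y) = 1" for th
    using sum_profiles_group[of 0 m Y "P th"] \<open>m \<ge> 1\<close> fin marg' exps
    by (simp add: is_experiment_def is_dist_def)
  then show ?thesis
    using nonneg support marg' by (simp add: couplings_def is_dist_def)
qed

lemma product_coupling:
  assumes exps: "\<forall>j<m. is_experiment (Y j) (Pj j)"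
  shows "(\<lambda>th ys. if ys \<in> profiles m Y then \<Prod>j<m. Pj j th (ys j) else 0) \<in> couplings m Y Pj"
    (is "?P \<in> _")
proof -
  have fin: "\<And>j. j < m \<Longrightarrow> finite (Y j)" and dist: "\<And>j th. j < m \<Longrightarrow> is_dist (Y j) (Pj j th)"
    using exps by (auto simp: is_experiment_def)
  have sum_prod: "(\<Sum>ys\<in>profiles m Z. \<Prod>j<m. Pj j th (ys j)) = (\<Prod>j<m. \<Sum>y\<in>Z j. Pj j th y)"
    if "\<And>j. j < m \<Longrightarrow> finite (Z j)" for Z th
    unfolding profiles_def using that by (subst prod_sum_PiE) auto
  have marg: "(\<Sum>ys\<in>{ys \<in> profiles m Y. ys j = y}. ?P th ys) = Pj j th y" if "j < m" "y \<in> Y j" for j th y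
  proof -
    have "(\<Sum>ys\<in>{ys \<in> profiles m Y. ys j = y}. ?P th ys)
        = (\<Sum>ys\<in>profiles m (Y(j := {y})). \<Prod>i<m. Pj i th (ys i))"
      using profiles_fix[of j m y Y] that by (intro sum.cong) auto
    also have "\<dots> = (\<Prod>i<m. \<Sum>z\<in>(Y(j := {y})) i. Pj i th z)"
      using fin by (intro sum_prod) auto
    also have "\<dots> = (\<Prod>i<m. if i = j then Pj j th y else 1)"
      using dist by (intro prod.cong) (auto simp: is_dist_def)
    also have "\<dots> = Pj j th y" using \<open>j < m\<close> by simp
    finally show ?thesis .
  qed
  show ?thesis
  proof (cases "m = 0")
    case True
    then show ?thesis by (simp add: couplings_def is_dist_def profiles_def)
  next
    case False
    then show ?thesis
      using dist by (intro couplingI[OF _ exps] marg) (auto simp: is_dist_def intro!: prod_nonneg)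
  qed
qed

lemma product_mixture:
  assumes "\<forall>l<k. finite (Ac l) \<and> is_dist (Ac l) (q l)"
  defines "\<beta> \<equiv> \<lambda>b. if b \<in> comp_actions k Ac then \<Prod>l<k. q l (b l) else 0"
  shows "is_dist (comp_actions k Ac) \<beta>"
    and "exp_util (comp_actions k Ac) (comp_util k uc) th \<beta> = (\<Sum>l<k. exp_util (Ac l) (uc l) th (q l))"
proof -
  have exps: "\<forall>l<k. is_experiment (Ac l) (\<lambda>_::unit. q l)"
    using assms(1) by (simp add: is_experiment_def)
  \<comment> \<open>\<open>\<beta>\<close> is the product coupling of the \<open>q l\<close>, seen as experiments over a single state.\<close>
  have P: "(\<lambda>_::unit. \<beta>) \<in> couplings k Ac (\<lambda>l _. q l)"
    using product_coupling[OF exps] by (simp add: \<beta>_def comp_actions_def profiles_def)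
  then show "is_dist (comp_actions k Ac) \<beta>"
    using coupling_is_dist by (fastforce simp: comp_actions_def profiles_def)
  have "exp_util (comp_actions k Ac) (comp_util k uc) th \<beta>
      = (\<Sum>l<k. \<Sum>b\<in>profiles k Ac. \<beta> b * uc l th (b l))"
    unfolding exp_util_def comp_util_def comp_actions_def profiles_def
    by (simp add: sum_distrib_left sum.swap[of _ "{..<k}"])
  also have "\<dots> = (\<Sum>l<k. exp_util (Ac l) (uc l) th (q l))"
    using coupling_expectation[OF P] assms(1) by (simp add: exp_util_def)
  finally show "exp_util (comp_actions k Ac) (comp_util k uc) th \<beta> = (\<Sum>l<k. exp_util (Ac l) (uc l) th (q l))" .
qed

definition dominated :: "'a set \<Rightarrow> ('th::finite \<Rightarrow> 'a \<Rightarrow> real) \<Rightarrow> (real^'th) set" where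
  "dominated A u = {v. \<exists>\<alpha>. is_dist A \<alpha> \<and> (\<forall>th. v $ th \<le> exp_util A u th \<alpha>)}"

lemma convex_dominated: "convex (dominated A u)"
  unfolding convex_def
proof (intro ballI allI impI)
  fix x y and s t :: real
  assume "x \<in> dominated A u" "y \<in> dominated A u" and st: "0 \<le> s" "0 \<le> t" "s + t = 1"
  then obtain \<alpha> \<beta> where \<alpha>: "is_dist A \<alpha>" "\<forall>th. x $ th \<le> exp_util A u th \<alpha>"
    and \<beta>: "is_dist A \<beta>" "\<forall>th. y $ th \<le> exp_util A u th \<beta>"
    by (auto simp: dominated_def)
  define \<gamma> where "\<gamma> = (\<lambda>a. s * \<alpha> a + t * \<beta> a)"
  have "is_dist A \<gamma>"
    using \<alpha>(1) \<beta>(1) st by (auto simp: is_dist_def \<gamma>_def sum.distrib simp flip: sum_distrib_left)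
  moreover have "s * x $ th + t * y $ th \<le> exp_util A u th \<gamma>" for th
  proof -
    have "s * x $ th + t * y $ th \<le> s * exp_util A u th \<alpha> + t * exp_util A u th \<beta>"
      using \<alpha>(2) \<beta>(2) st by (intro add_mono mult_left_mono) auto
    also have "\<dots> = exp_util A u th \<gamma>"
      by (simp add: exp_util_def \<gamma>_def sum.distrib sum_distrib_left algebra_simps)
    finally show ?thesis .
  qed
  ultimately show "s *\<^sub>R x + t *\<^sub>R y \<in> dominated A u" by (auto simp: dominated_def)
qed

lemma dominated_subset_Hset:
  assumes "finite A"
  shows "dominated A u \<subseteq> Hset A u"
proof
  fix v assume "v \<in> dominated A u"
  then obtain \<alpha> where \<alpha>: "is_dist A \<alpha>" "\<forall>th. v $ th \<le> exp_util A u th \<alpha>"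
    by (auto simp: dominated_def)
  define w where "w = (\<Sum>a\<in>A. \<alpha> a *\<^sub>R (\<chi> th. u th a))"
  have "w \<in> convex hull ((\<lambda>a. \<chi> th. u th a) ` A)"
    unfolding w_def using \<alpha>(1) assms
    by (intro convex_sum) (auto simp: is_dist_def hull_subset[THEN subsetD])
  moreover have "w $ th = exp_util A u th \<alpha>" for th
    by (simp add: w_def exp_util_def)
  ultimately show "v \<in> Hset A u"
    using \<alpha>(2) unfolding Hset_def by (intro CollectI exI[of _ w] exI[of _ "w - v"]) auto
qed

lemma Hset_subset_dominated:
  assumes "\<And>b. b \<in> B \<Longrightarrow> (\<chi> th. v th b) \<in> dominated A u"
  shows "Hset B v \<subseteq> dominated A u"
proof
  fix x assume "x \<in> Hset B v"
  then obtain y z where x: "x = y - z" "\<forall>th. 0 \<le> z $ th"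
    and y: "y \<in> convex hull ((\<lambda>b. \<chi> th. v th b) ` B)"
    by (auto simp: Hset_def)
  have "convex hull ((\<lambda>b. \<chi> th. v th b) ` B) \<subseteq> dominated A u"
    using assms by (intro hull_minimal convex_dominated) auto
  then obtain \<alpha> where "is_dist A \<alpha>" "\<forall>th. y $ th \<le> exp_util A u th \<alpha>"
    using y by (auto simp: dominated_def)
  then show "x \<in> dominated A u"
    unfolding dominated_def using x by (intro CollectI exI[of _ \<alpha>]) (auto intro: order_trans[rotated])
qed

lemma Hset_eq_dominated:
  assumes "finite A"
  shows "Hset A u = dominated A u"
proof (intro antisym dominated_subset_Hset[OF assms] Hset_subset_dominated)
  fix a assume "a \<in> A"
  then show "(\<chi> th. u th a) \<in> dominated A u"
    using assms unfolding dominated_def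
    by (intro CollectI exI[of _ "\<lambda>a'. if a' = a then 1 else 0"])
      (simp add: is_dist_def exp_util_def if_distrib[of "\<lambda>z. z * _"] cong: if_cong)
qed

section \<open>Values as suprema of expected payoffs\<close>

definition expected_payoff :: "'a set \<Rightarrow> ('th::finite \<Rightarrow> 'a \<Rightarrow> real) \<Rightarrow> 's set
    \<Rightarrow> ('th \<Rightarrow> 's \<Rightarrow> real) \<Rightarrow> ('s \<Rightarrow> 'a \<Rightarrow> real) \<Rightarrow> real" where
  "expected_payoff A u S p \<sigma> = (\<Sum>th\<in>UNIV. \<Sum>s\<in>S. p th s * exp_util A u th (\<sigma> s))"

lemma Vjoint_eq: "Vjoint A u m Y Pj =
    (SUP \<sigma>\<in>strategies (profiles m Y) A. INF P\<in>couplings m Y Pj. expected_payoff A u (profiles m Y) P \<sigma>)"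
  unfolding Vjoint_def expected_payoff_def ..

lemma Vsingle_eq: "Vsingle A u Y P = (SUP \<tau>\<in>strategies Y A. expected_payoff A u Y P \<tau>)"
  unfolding Vsingle_def expected_payoff_def ..

lemma strategies_nonempty: "A \<noteq> {} \<Longrightarrow> finite A \<Longrightarrow> strategies S A \<noteq> {}"
proof -
  assume "A \<noteq> {}" "finite A"
  then obtain a where "a \<in> A" by blast
  then have "(\<lambda>_ a'. if a' = a then 1 else 0) \<in> strategies S A"
    using \<open>finite A\<close> by (simp add: strategies_def is_dist_def)
  then show ?thesis by blast
qed

lemma expected_payoff_abs_le:
  assumes "finite A" "finite S" "\<And>th. is_dist S (p th)" "\<sigma> \<in> strategies S A"
  shows "\<bar>expected_payoff A u S p \<sigma>\<bar> \<le> (\<Sum>th\<in>UNIV. \<Sum>a\<in>A. \<bar>u th a\<bar>)"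
  unfolding expected_payoff_def using assms
  by (intro order_trans[OF sum_abs] sum_mono expectation_abs_le exp_util_abs_le)
    (auto simp: strategies_def)

lemma bdd_below_joint_payoffs:
  assumes "finite A" "finite (profiles m Y)" "\<sigma> \<in> strategies (profiles m Y) A"
  shows "bdd_below ((\<lambda>P. expected_payoff A u (profiles m Y) P \<sigma>) ` couplings m Y Pj)"
proof (rule bdd_belowI2)
  fix P assume "P \<in> couplings m Y Pj"
  then have "\<bar>expected_payoff A u (profiles m Y) P \<sigma>\<bar> \<le> (\<Sum>th\<in>UNIV. \<Sum>a\<in>A. \<bar>u th a\<bar>)"
    using assms coupling_is_dist by (intro expected_payoff_abs_le) auto
  then show "- (\<Sum>th\<in>UNIV. \<Sum>a\<in>A. \<bar>u th a\<bar>) \<le> expected_payoff A u (profiles m Y) P \<sigma>"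
    by (simp add: abs_le_iff)
qed

lemma Vjoint_le:
  assumes "finite A" "A \<noteq> {}" "finite (profiles m Y)" "P \<in> couplings m Y Pj"
    and le: "\<And>\<sigma>. \<sigma> \<in> strategies (profiles m Y) A \<Longrightarrow> expected_payoff A u (profiles m Y) P \<sigma> \<le> c"
  shows "Vjoint A u m Y Pj \<le> c"
  unfolding Vjoint_eq
proof (rule cSUP_least)
  show "strategies (profiles m Y) A \<noteq> {}" using assms(1,2) by (rule strategies_nonempty[rotated])
  show "(INF P\<in>couplings m Y Pj. expected_payoff A u (profiles m Y) P \<sigma>) \<le> c"
    if "\<sigma> \<in> strategies (profiles m Y) A" for \<sigma>
    using cINF_lower[OF bdd_below_joint_payoffs[OF assms(1,3) that] assms(4)] le[OF that]
    by (rule order_trans)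
qed

lemma Vjoint_ge:
  assumes "finite A" "finite (profiles m Y)" "P \<in> couplings m Y Pj"
    and \<sigma>: "\<sigma> \<in> strategies (profiles m Y) A"
    and ge: "\<And>P. P \<in> couplings m Y Pj \<Longrightarrow> c \<le> expected_payoff A u (profiles m Y) P \<sigma>"
  shows "c \<le> Vjoint A u m Y Pj"
proof -
  have "(INF P\<in>couplings m Y Pj. expected_payoff A u (profiles m Y) P \<sigma>') \<le> (\<Sum>th\<in>UNIV. \<Sum>a\<in>A. \<bar>u th a\<bar>)"
    if "\<sigma>' \<in> strategies (profiles m Y) A" for \<sigma>'
  proof -
    have "\<bar>expected_payoff A u (profiles m Y) P \<sigma>'\<bar> \<le> (\<Sum>th\<in>UNIV. \<Sum>a\<in>A. \<bar>u th a\<bar>)"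
      using assms(1,2,3) that coupling_is_dist by (intro expected_payoff_abs_le) auto
    then show ?thesis
      using assms(1,2,3) that
      by (intro order_trans[OF cINF_lower[OF bdd_below_joint_payoffs]]) (auto simp: abs_le_iff)
  qed
  then have "bdd_above ((\<lambda>\<sigma>. INF P\<in>couplings m Y Pj. expected_payoff A u (profiles m Y) P \<sigma>)
      ` strategies (profiles m Y) A)"
    by (rule bdd_aboveI2)
  moreover have "c \<le> (INF P\<in>couplings m Y Pj. expected_payoff A u (profiles m Y) P \<sigma>)"
    using assms(3) ge by (intro cINF_greatest) auto
  ultimately show ?thesis
    unfolding Vjoint_eq using \<sigma> by (intro order_trans[OF _ cSUP_upper])
qed

lemma expected_payoff_le_Vsingle:
  assumes "finite A" "is_experiment Y P" "\<tau> \<in> strategies Y A"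
  shows "expected_payoff A u Y P \<tau> \<le> Vsingle A u Y P"
  unfolding Vsingle_eq using assms expected_payoff_abs_le[OF assms(1)]
  by (intro cSUP_upper bdd_aboveI2) (auto simp: is_experiment_def abs_le_iff)

lemma Vsingle_approx:
  assumes "finite A" "A \<noteq> {}" "0 < \<epsilon>"
  shows "\<exists>\<tau>\<in>strategies Y A. Vsingle A u Y P - \<epsilon> < expected_payoff A u Y P \<tau>"
proof (rule ccontr)
  assume "\<not> ?thesis"
  then have "Vsingle A u Y P \<le> Vsingle A u Y P - \<epsilon>"
    unfolding Vsingle_eq[of A u Y P] using strategies_nonempty[OF assms(2,1)]
    by (intro cSUP_least) (auto simp: not_less)
  then show False using assms(3) by simp
qed

section \<open>Duality for the joint value\<close>

lemma expected_payoff_le_dual: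
  assumes "finite A" "\<sigma> \<in> strategies S A"
    and "\<And>s a. s \<in> S \<Longrightarrow> a \<in> A \<Longrightarrow> (\<Sum>th\<in>UNIV. \<pi> th s * u th a) \<le> \<nu> s"
  shows "expected_payoff A u S \<pi> \<sigma> \<le> (\<Sum>s\<in>S. \<nu> s)"
proof -
  have "expected_payoff A u S \<pi> \<sigma> = (\<Sum>s\<in>S. \<Sum>a\<in>A. \<sigma> s a * (\<Sum>th\<in>UNIV. \<pi> th s * u th a))"
    unfolding expected_payoff_def exp_util_def
    by (simp add: sum_distrib_left sum.swap[of _ UNIV] algebra_simps)
  also have "\<dots> \<le> (\<Sum>s\<in>S. \<Sum>a\<in>A. \<sigma> s a * \<nu> s)"
    using assms(2,3) by (intro sum_mono mult_left_mono) (auto simp: strategies_def is_dist_def)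
  also have "\<dots> = (\<Sum>s\<in>S. \<nu> s)"
    using assms(2) by (intro sum.cong) (auto simp: strategies_def is_dist_def simp flip: sum_distrib_right)
  finally show ?thesis .
qed

lemma scaled_coupling:
  assumes m: "m \<ge> 1" and exps: "\<forall>j<m. is_experiment (Y j) (Pj j)" and "0 < \<kappa>"
    and \<pi>: "\<And>th ys. ys \<in> profiles m Y \<Longrightarrow> 0 \<le> \<pi> th ys"
    and marg: "\<And>j th y. j < m \<Longrightarrow> y \<in> Y j \<Longrightarrow>
      (\<Sum>ys\<in>{ys \<in> profiles m Y. ys j = y}. \<pi> th ys) = \<kappa> * Pj j th y"
  shows "(\<lambda>th ys. if ys \<in> profiles m Y then \<pi> th ys / \<kappa> else 0) \<in> couplings m Y Pj"
proof (rule couplingI[OF m exps])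
  show "\<And>th ys. 0 \<le> (if ys \<in> profiles m Y then \<pi> th ys / \<kappa> else 0)"
    using \<pi> \<open>0 < \<kappa>\<close> by simp
  show "(\<Sum>ys\<in>{ys \<in> profiles m Y. ys j = y}. if ys \<in> profiles m Y then \<pi> th ys / \<kappa> else 0) = Pj j th y"
    if "j < m" "y \<in> Y j" for j th y
  proof -
    have "(\<Sum>ys\<in>{ys \<in> profiles m Y. ys j = y}. if ys \<in> profiles m Y then \<pi> th ys / \<kappa> else 0)
        = (\<Sum>ys\<in>{ys \<in> profiles m Y. ys j = y}. \<pi> th ys) / \<kappa>"
      unfolding sum_divide_distrib by (intro sum.cong) auto
    then show ?thesis using marg[OF that, of th] \<open>0 < \<kappa>\<close> by simp
  qed
qed simp

lemma Vjoint_le_dual: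
  assumes A: "finite A" "A \<noteq> {}" and m: "m \<ge> 1" and exps: "\<forall>j<m. is_experiment (Y j) (Pj j)"
    and \<pi>: "\<And>th ys. ys \<in> profiles m Y \<Longrightarrow> 0 \<le> \<pi> th ys" and "0 \<le> \<kappa>"
    and marg: "\<And>j th y. j < m \<Longrightarrow> y \<in> Y j \<Longrightarrow>
      (\<Sum>ys\<in>{ys \<in> profiles m Y. ys j = y}. \<pi> th ys) = \<kappa> * Pj j th y"
    and dom: "\<And>ys a. ys \<in> profiles m Y \<Longrightarrow> a \<in> A \<Longrightarrow> (\<Sum>th\<in>UNIV. \<pi> th ys * u th a) \<le> \<nu> ys"
  shows "\<kappa> * Vjoint A u m Y Pj \<le> (\<Sum>ys\<in>profiles m Y. \<nu> ys)"
proof -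
  define S where "S = profiles m Y"
  have finS: "finite S"
    unfolding S_def using exps by (intro finite_profiles) (simp add: is_experiment_def)
  show ?thesis
  proof (cases "\<kappa> = 0")
    case True
    have "\<pi> th ys = 0" if "ys \<in> S" for th ys
    proof -
      have "(\<Sum>ys'\<in>{ys' \<in> S. ys' 0 = ys 0}. \<pi> th ys') = 0"
        using marg[of 0 "ys 0" th] True m profiles_memD[of ys m Y 0] that by (simp add: S_def)
      then show ?thesis
        using finS \<pi> that by (subst (asm) sum_nonneg_eq_0_iff) (auto simp: S_def)
    qed
    moreover obtain a where "a \<in> A" using A(2) by blast
    ultimately have "0 \<le> \<nu> ys" if "ys \<in> S" for ys
      using dom[of ys a] that by (simp add: S_def)
    then show ?thesis using True by (simp add: sum_nonneg flip: S_def)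
  next
    case False
    then have "0 < \<kappa>" using \<open>0 \<le> \<kappa>\<close> by simp
    define P where "P = (\<lambda>th ys. if ys \<in> S then \<pi> th ys / \<kappa> else 0)"
    have "P \<in> couplings m Y Pj"
      unfolding P_def S_def using \<open>0 < \<kappa>\<close> \<pi> marg by (rule scaled_coupling[OF m exps])
    moreover have "expected_payoff A u S P \<sigma> \<le> (\<Sum>ys\<in>S. \<nu> ys) / \<kappa>"
      if "\<sigma> \<in> strategies S A" for \<sigma>
    proof -
      have "expected_payoff A u S P \<sigma> = expected_payoff A u S \<pi> \<sigma> / \<kappa>"
        by (simp add: expected_payoff_def P_def sum_divide_distrib cong: sum.cong)
      also have "\<dots> \<le> (\<Sum>ys\<in>S. \<nu> ys) / \<kappa>"
        using expected_payoff_le_dual[OF A(1) that, of \<pi> u \<nu>] dom \<open>0 < \<kappa>\<close>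
        by (simp add: S_def divide_right_mono)
      finally show ?thesis .
    qed
    ultimately have "Vjoint A u m Y Pj \<le> (\<Sum>ys\<in>S. \<nu> ys) / \<kappa>"
      using A finS by (intro Vjoint_le) (auto simp: S_def)
    then show ?thesis using \<open>0 < \<kappa>\<close> by (simp add: S_def field_simps)
  qed
qed

text \<open>
  The primal programme has variables \<open>Payoff j th y\<close> for \<open>w\<^sub>j(th, y)\<close> and \<open>Mix ys a\<close> for \<open>\<sigma>(ys)(a)\<close>;
  its rows are the domination constraints, \<open>\<sigma> \<ge> 0\<close>, the equation \<open>\<Sum>\<^sub>a \<sigma>(ys)(a) = 1\<close> split into the
  two inequalities \<open>MixTotal ys True\<close> and \<open>MixTotal ys False\<close>, and \<open>t \<le> \<Sum>\<^sub>j E\<^bsub>P\<^sub>j\<^esub> w\<^sub>j\<close>.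
\<close>

datatype ('th, 'y, 'a) lp_var = Payoff nat 'th 'y | Mix "nat \<Rightarrow> 'y" 'a

datatype ('th, 'y, 'a) lp_row = Dominance 'th "nat \<Rightarrow> 'y" | MixNonneg "nat \<Rightarrow> 'y" 'a
  | MixTotal "nat \<Rightarrow> 'y" bool | Value

definition lp_vars :: "'a set \<Rightarrow> nat \<Rightarrow> (nat \<Rightarrow> 'y set) \<Rightarrow> ('th, 'y, 'a) lp_var set" where
  "lp_vars A m Y = (\<lambda>(j, th, y). Payoff j th y) ` Sigma {..<m} (\<lambda>j. UNIV \<times> Y j)
     \<union> case_prod Mix ` (profiles m Y \<times> A)"

definition lp_rows :: "'a set \<Rightarrow> nat \<Rightarrow> (nat \<Rightarrow> 'y set) \<Rightarrow> ('th, 'y, 'a) lp_row set" where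
  "lp_rows A m Y = case_prod Dominance ` (UNIV \<times> profiles m Y) \<union> case_prod MixNonneg ` (profiles m Y \<times> A)
     \<union> case_prod MixTotal ` (profiles m Y \<times> UNIV) \<union> {Value}"

primrec lp_lhs :: "'a set \<Rightarrow> ('th::finite \<Rightarrow> 'a \<Rightarrow> real) \<Rightarrow> nat \<Rightarrow> (nat \<Rightarrow> 'y set)
    \<Rightarrow> (nat \<Rightarrow> 'th \<Rightarrow> 'y \<Rightarrow> real) \<Rightarrow> ('th, 'y, 'a) lp_row \<Rightarrow> (('th, 'y, 'a) lp_var \<Rightarrow> real) \<Rightarrow> real" where
  "lp_lhs A u m Y Pj (Dominance th ys) = (\<lambda>x. (\<Sum>j<m. x (Payoff j th (ys j))) - (\<Sum>a\<in>A. x (Mix ys a) * u th a))"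
| "lp_lhs A u m Y Pj (MixNonneg ys a) = (\<lambda>x. - x (Mix ys a))"
| "lp_lhs A u m Y Pj (MixTotal ys up) = (\<lambda>x. (if up then 1 else -1) * (\<Sum>a\<in>A. x (Mix ys a)))"
| "lp_lhs A u m Y Pj Value = (\<lambda>x. - (\<Sum>j<m. \<Sum>th\<in>UNIV. \<Sum>y\<in>Y j. Pj j th y * x (Payoff j th y)))"

primrec lp_rhs :: "real \<Rightarrow> ('th, 'y, 'a) lp_row \<Rightarrow> real" where
  "lp_rhs t (Dominance th ys) = 0"
| "lp_rhs t (MixNonneg ys a) = 0"
| "lp_rhs t (MixTotal ys up) = (if up then 1 else -1)"
| "lp_rhs t Value = - t"

lemma lp_rows_iff [simp]:
  "Dominance th ys \<in> lp_rows A m Y \<longleftrightarrow> ys \<in> profiles m Y"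
  "MixNonneg ys a \<in> lp_rows A m Y \<longleftrightarrow> ys \<in> profiles m Y \<and> a \<in> A"
  "MixTotal ys up \<in> lp_rows A m Y \<longleftrightarrow> ys \<in> profiles m Y"
  "Value \<in> lp_rows A m Y"
  by (auto simp: lp_rows_def)

lemma lp_vars_iff [simp]:
  "Payoff j th y \<in> lp_vars A m Y \<longleftrightarrow> j < m \<and> y \<in> Y j"
  "Mix ys a \<in> lp_vars A m Y \<longleftrightarrow> ys \<in> profiles m Y \<and> a \<in> A"
  by (force simp: lp_vars_def)+

lemma sum_lp_rows:
  fixes f :: "('th::finite, 'y, 'a) lp_row \<Rightarrow> real"
  assumes "finite A" "finite (profiles m Y)"
  shows "(\<Sum>r\<in>lp_rows A m Y. f r) = (\<Sum>th\<in>UNIV. \<Sum>ys\<in>profiles m Y. f (Dominance th ys))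
    + (\<Sum>ys\<in>profiles m Y. \<Sum>a\<in>A. f (MixNonneg ys a))
    + (\<Sum>ys\<in>profiles m Y. f (MixTotal ys True) + f (MixTotal ys False)) + f Value"
proof -
  define D :: "('th, 'y, 'a) lp_row set" where "D = case_prod Dominance ` (UNIV \<times> profiles m Y)"
  define N :: "('th, 'y, 'a) lp_row set" where "N = case_prod MixNonneg ` (profiles m Y \<times> A)"
  define T :: "('th, 'y, 'a) lp_row set" where "T = case_prod MixTotal ` (profiles m Y \<times> UNIV)"
  have fin: "finite D" "finite N" "finite T"
    using assms by (auto simp: D_def N_def T_def intro!: finite_cartesian_product)
  have rows: "lp_rows A m Y = insert Value (D \<union> N \<union> T)"
    by (auto simp: lp_rows_def D_def N_def T_def)
  have "D \<inter> N = {}" "(D \<union> N) \<inter> T = {}" "Value \<notin> D \<union> N \<union> T"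
    by (auto simp: D_def N_def T_def)
  then have "(\<Sum>r\<in>lp_rows A m Y. f r) = sum f D + sum f N + sum f T + f Value"
    unfolding rows using fin by (simp add: sum.union_disjoint)
  moreover have "sum f D = (\<Sum>th\<in>UNIV. \<Sum>ys\<in>profiles m Y. f (Dominance th ys))"
    by (simp add: D_def sum.reindex inj_on_def sum.cartesian_product split_beta)
  moreover have "sum f N = (\<Sum>ys\<in>profiles m Y. \<Sum>a\<in>A. f (MixNonneg ys a))"
    by (simp add: N_def sum.reindex inj_on_def sum.cartesian_product split_beta)
  moreover have "sum f T = (\<Sum>ys\<in>profiles m Y. \<Sum>up\<in>UNIV. f (MixTotal ys up))"
    by (simp add: T_def sum.reindex inj_on_def sum.cartesian_product prod.case_distrib)
  ultimately show ?thesis by (simp add: UNIV_bool add.commute)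
qed

lemma finite_lp_vars:
  fixes A :: "'a set" and Y :: "nat \<Rightarrow> 'y set"
  assumes "finite A" "\<And>j. j < m \<Longrightarrow> finite (Y j)"
  shows "finite (lp_vars A m Y :: ('th::finite, 'y, 'a) lp_var set)"
  using assms finite_profiles[of m Y] unfolding lp_vars_def
  by (intro finite_UnI finite_imageI finite_SigmaI finite_cartesian_product) auto

lemma linear_form_on_lp_lhs:
  fixes A :: "'a set" and u :: "'th::finite \<Rightarrow> 'a \<Rightarrow> real" and Y :: "nat \<Rightarrow> 'y set"
  assumes "finite A" "\<And>j. j < m \<Longrightarrow> finite (Y j)" "r \<in> lp_rows A m Y"
  shows "linear_form_on (lp_vars A m Y) (lp_lhs A u m Y Pj r)"
proof -
  have fin: "finite (lp_vars A m Y :: ('th, 'y, 'a) lp_var set)" using assms(1,2) by (rule finite_lp_vars)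
  have payoff: "linear_form_on (lp_vars A m Y) (\<lambda>x. x (Payoff j th y))"
    if "j < m" "y \<in> Y j" for j and th :: 'th and y
    using that by (intro linear_form_on_coordinate[OF fin]) simp
  have mix: "linear_form_on (lp_vars A m Y) (\<lambda>x :: ('th, 'y, 'a) lp_var \<Rightarrow> real. x (Mix ys a))" if "ys \<in> profiles m Y" "a \<in> A" for ys a
    using that by (intro linear_form_on_coordinate[OF fin]) simp
  show ?thesis
    using assms(3) unfolding lp_rows_def
    by (auto intro!: linear_form_on_diff linear_form_on_sum linear_form_on_scale linear_form_on_scale_right
        linear_form_on_minus payoff mix profiles_memD assms(1,2))
qed

lemma lp_feasible_imp_minorant:
  assumes "\<forall>r\<in>lp_rows A m Y. lp_lhs A u m Y Pj r x \<le> lp_rhs t r"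
  shows "\<exists>w \<sigma>. \<sigma> \<in> strategies (profiles m Y) A
    \<and> (\<forall>th. \<forall>ys\<in>profiles m Y. (\<Sum>j<m. w j th (ys j)) \<le> exp_util A u th (\<sigma> ys))
    \<and> t \<le> (\<Sum>j<m. \<Sum>th\<in>UNIV. \<Sum>y\<in>Y j. Pj j th y * w j th y)"
proof (intro exI conjI ballI allI)
  define \<sigma> where "\<sigma> = (\<lambda>ys a. if a \<in> A then x (Mix ys a) else 0)"
  have row: "lp_lhs A u m Y Pj r x \<le> lp_rhs t r" if "r \<in> lp_rows A m Y" for r
    using assms that by blast
  have "is_dist A (\<sigma> ys)" if "ys \<in> profiles m Y" for ys
    using row[of "MixNonneg ys _"] row[of "MixTotal ys True"] row[of "MixTotal ys False"] that
    by (auto simp: is_dist_def \<sigma>_def)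
  then show "\<sigma> \<in> strategies (profiles m Y) A" by (simp add: strategies_def)
  show "(\<Sum>j<m. x (Payoff j th (ys j))) \<le> exp_util A u th (\<sigma> ys)" if "ys \<in> profiles m Y" for th ys
    using row[of "Dominance th ys"] that by (simp add: exp_util_def \<sigma>_def)
  show "t \<le> (\<Sum>j<m. \<Sum>th\<in>UNIV. \<Sum>y\<in>Y j. Pj j th y * x (Payoff j th y))"
    using row[of Value] by simp
qed

lemma lp_dual_payoff:
  fixes y :: "('th::finite, 'y, 'a) lp_row \<Rightarrow> real"
  assumes fin: "finite A" "\<And>j. j < m \<Longrightarrow> finite (Y j)"
    and dual: "\<forall>x. (\<Sum>r\<in>lp_rows A m Y. y r * lp_lhs A u m Y Pj r x) = 0"
    and "j < m" "z \<in> Y j"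
  shows "(\<Sum>ys\<in>{ys \<in> profiles m Y. ys j = z}. y (Dominance th ys)) = y Value * Pj j th z"
proof -
  define e :: "('th, 'y, 'a) lp_var \<Rightarrow> real" where "e = (\<lambda>v. if v = Payoff j th z then 1 else 0)"
  have dom: "lp_lhs A u m Y Pj (Dominance th' ys) e = (if th' = th \<and> ys j = z then 1 else 0)" for th' ys
  proof -
    have "(\<Sum>j'<m. e (Payoff j' th' (ys j'))) = (\<Sum>j'<m. if j' = j then (if th' = th \<and> ys j = z then 1 else 0) else 0)"
      by (intro sum.cong) (auto simp: e_def)
    then show ?thesis using \<open>j < m\<close> by (simp add: e_def)
  qed
  have inner: "(\<Sum>y'\<in>Y j'. Pj j' th' y' * e (Payoff j' th' y'))
      = (if th' = th then if j' = j then Pj j th z else 0 else 0)" for j' th'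
  proof (cases "j' = j \<and> th' = th")
    case True
    then show ?thesis
      using fin(2)[OF \<open>j < m\<close>] \<open>z \<in> Y j\<close>
      by (simp add: e_def if_distrib[of "\<lambda>v. _ * v"] cong: if_cong)
  qed (auto simp: e_def)
  have val: "lp_lhs A u m Y Pj Value e = - Pj j th z"
    using \<open>j < m\<close> by (simp add: inner)
  have mix: "lp_lhs A u m Y Pj (MixNonneg ys a) e = 0" "lp_lhs A u m Y Pj (MixTotal ys up) e = 0" for ys a up
    by (simp_all add: e_def)
  have "0 = (\<Sum>r\<in>lp_rows A m Y. y r * lp_lhs A u m Y Pj r e)" using dual by simp
  also have "\<dots> = (\<Sum>th'\<in>UNIV. \<Sum>ys\<in>profiles m Y. y (Dominance th' ys) * (if th' = th \<and> ys j = z then 1 else 0))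
      - y Value * Pj j th z"
    using fin by (simp add: sum_lp_rows finite_profiles dom val mix del: lp_lhs.simps)
  also have "(\<Sum>th'\<in>UNIV. \<Sum>ys\<in>profiles m Y. y (Dominance th' ys) * (if th' = th \<and> ys j = z then 1 else 0))
      = (\<Sum>th'\<in>UNIV. if th' = th then \<Sum>ys\<in>profiles m Y. if ys j = z then y (Dominance th ys) else 0 else 0)"
    by (intro sum.cong) (auto intro!: sum.cong)
  also have "\<dots> = (\<Sum>ys\<in>{ys \<in> profiles m Y. ys j = z}. y (Dominance th ys))"
    using fin by (simp add: sum.inter_filter finite_profiles)
  finally show ?thesis by simp
qed

lemma lp_dual_mix:
  fixes y :: "('th::finite, 'y, 'a) lp_row \<Rightarrow> real"
  assumes fin: "finite A" "\<And>j. j < m \<Longrightarrow> finite (Y j)"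
    and dual: "\<forall>x. (\<Sum>r\<in>lp_rows A m Y. y r * lp_lhs A u m Y Pj r x) = 0"
    and nonneg: "\<forall>r\<in>lp_rows A m Y. 0 \<le> y r"
    and ys: "ys \<in> profiles m Y" and a: "a \<in> A"
  shows "(\<Sum>th\<in>UNIV. y (Dominance th ys) * u th a) \<le> y (MixTotal ys True) - y (MixTotal ys False)"
proof -
  define e :: "('th, 'y, 'a) lp_var \<Rightarrow> real" where "e = (\<lambda>v. if v = Mix ys a then 1 else 0)"
  have mix_sum: "(\<Sum>a'\<in>A. e (Mix ys' a') * f a') = (if ys' = ys then f a else 0)" for ys' f
  proof -
    have "(\<Sum>a'\<in>A. e (Mix ys' a') * f a') = (\<Sum>a'\<in>A. if a' = a then (if ys' = ys then f a else 0) else 0)"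
      by (intro sum.cong) (auto simp: e_def)
    then show ?thesis using fin(1) a by simp
  qed
  have rows: "lp_lhs A u m Y Pj (Dominance th ys') e = (if ys' = ys then - u th a else 0)"
    "lp_lhs A u m Y Pj (MixNonneg ys' a') e = (if a' = a then if ys' = ys then -1 else 0 else 0)"
    "lp_lhs A u m Y Pj (MixTotal ys' up) e = (if ys' = ys then if up then 1 else -1 else 0)"
    "lp_lhs A u m Y Pj Value e = 0" for th ys' a' up
    using mix_sum[of ys' "u th"] mix_sum[of ys' "\<lambda>_. 1"] by (auto simp: e_def)
  have "0 = (\<Sum>r\<in>lp_rows A m Y. y r * lp_lhs A u m Y Pj r e)" using dual by simp
  also have "\<dots> = - (\<Sum>th\<in>UNIV. y (Dominance th ys) * u th a) - y (MixNonneg ys a)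
      + y (MixTotal ys True) - y (MixTotal ys False)"
    using fin ys a
    by (simp add: sum_lp_rows finite_profiles rows if_distrib[of "\<lambda>v. _ * v"] sum.distrib
        sum_negf del: lp_lhs.simps cong: if_cong)
  finally have "0 = - (\<Sum>th\<in>UNIV. y (Dominance th ys) * u th a) - y (MixNonneg ys a)
      + y (MixTotal ys True) - y (MixTotal ys False)" .
  moreover have "0 \<le> y (MixNonneg ys a)" using nonneg ys a by simp
  ultimately show ?thesis by linarith
qed

lemma finite_lp_rows:
  assumes "finite A" "\<And>j. j < m \<Longrightarrow> finite (Y j)"
  shows "finite (lp_rows A m Y :: ('th::finite, 'y, 'a) lp_row set)"
  using assms finite_profiles[of m Y] by (simp add: lp_rows_def)

lemma Vjoint_separable_minorant:
  fixes A :: "'a set" and u :: "'th::finite \<Rightarrow> 'a \<Rightarrow> real" and Y :: "nat \<Rightarrow> 'y set"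
  assumes dp: "decision_problem A" and m: "m \<ge> 1" and exps: "\<forall>j<m. is_experiment (Y j) (Pj j)"
  shows "\<exists>w \<sigma>. \<sigma> \<in> strategies (profiles m Y) A
    \<and> (\<forall>th. \<forall>ys\<in>profiles m Y. (\<Sum>j<m. w j th (ys j)) \<le> exp_util A u th (\<sigma> ys))
    \<and> Vjoint A u m Y Pj \<le> (\<Sum>j<m. \<Sum>th\<in>UNIV. \<Sum>y\<in>Y j. Pj j th y * w j th y)"
proof (rule ccontr)
  assume no_minorant: "\<not> ?thesis"
  define V where "V = Vjoint A u m Y Pj"
  have A: "finite A" "A \<noteq> {}" using dp by (auto simp: decision_problem_def)
  have finY: "\<And>j. j < m \<Longrightarrow> finite (Y j)" using exps by (simp add: is_experiment_def)
  have infeasible: "\<not> (\<exists>x. \<forall>r\<in>lp_rows A m Y. lp_lhs A u m Y Pj r x \<le> lp_rhs V r)"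
  proof
    assume "\<exists>x. \<forall>r\<in>lp_rows A m Y. lp_lhs A u m Y Pj r x \<le> lp_rhs V r"
    then obtain x where "\<forall>r\<in>lp_rows A m Y. lp_lhs A u m Y Pj r x \<le> lp_rhs V r" ..
    from lp_feasible_imp_minorant[OF this] show False using no_minorant by (simp add: V_def)
  qed
  have linear: "\<forall>r\<in>lp_rows A m Y. linear_form_on (lp_vars A m Y) (lp_lhs A u m Y Pj r)"
    using linear_form_on_lp_lhs[of A m Y] A(1) finY by blast
  have fin: "finite (lp_vars A m Y :: ('th, 'y, 'a) lp_var set)"
    "finite (lp_rows A m Y :: ('th, 'y, 'a) lp_row set)"
    using finite_lp_vars[of A m Y] finite_lp_rows[of A m Y] A(1) finY by blast+
  obtain y :: "('th, 'y, 'a) lp_row \<Rightarrow> real" where y_nonneg: "\<forall>r\<in>lp_rows A m Y. 0 \<le> y r"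
    and dual: "\<forall>x. (\<Sum>r\<in>lp_rows A m Y. y r * lp_lhs A u m Y Pj r x) = 0"
    and rhs: "(\<Sum>r\<in>lp_rows A m Y. y r * lp_rhs V r) < 0"
    using farkas_linear_forms[OF fin linear infeasible] by blast
  define \<nu> where "\<nu> = (\<lambda>ys. y (MixTotal ys True) - y (MixTotal ys False))"
  have "y Value * V \<le> (\<Sum>ys\<in>profiles m Y. \<nu> ys)"
    unfolding V_def
  proof (rule Vjoint_le_dual[OF A m exps])
    show "0 \<le> y (Dominance th ys)" if "ys \<in> profiles m Y" for th ys using y_nonneg that by simp
    show "0 \<le> y Value" using y_nonneg by simp
    show "(\<Sum>ys\<in>{ys \<in> profiles m Y. ys j = z}. y (Dominance th ys)) = y Value * Pj j th z"
      if "j < m" "z \<in> Y j" for j th z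
      using lp_dual_payoff[of A m Y, OF A(1) finY dual that] .
    show "(\<Sum>th\<in>UNIV. y (Dominance th ys) * u th a) \<le> \<nu> ys"
      if "ys \<in> profiles m Y" "a \<in> A" for ys a
      using lp_dual_mix[of A m Y, OF A(1) finY dual y_nonneg that] by (simp add: \<nu>_def)
  qed
  moreover have "(\<Sum>r\<in>lp_rows A m Y. y r * lp_rhs V r) = (\<Sum>ys\<in>profiles m Y. \<nu> ys) - y Value * V"
    using A finY by (simp add: sum_lp_rows finite_profiles \<nu>_def sum_subtractf)
  ultimately show False using rhs by simp
qed

section \<open>Weak decompositions\<close>

lemma finite_comp_actions: "(\<And>l. l < k \<Longrightarrow> finite (Ac l)) \<Longrightarrow> finite (comp_actions k Ac)"
  unfolding comp_actions_def by (rule finite_PiE) auto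

lemma weak_decomposition_dominates:
  assumes "finite A" and wd: "weak_decomposition A u k Ac uc" and q: "\<forall>l<k. is_dist (Ac l) (q l)"
  shows "\<exists>\<alpha>. is_dist A \<alpha> \<and> (\<forall>th. (\<Sum>l<k. exp_util (Ac l) (uc l) th (q l)) \<le> exp_util A u th \<alpha>)"
proof -
  have fin: "\<forall>l<k. finite (Ac l) \<and> is_dist (Ac l) (q l)"
    using wd q by (simp add: weak_decomposition_def decision_problem_def)
  define \<beta> where "\<beta> = (\<lambda>b. if b \<in> comp_actions k Ac then \<Prod>l<k. q l (b l) else 0)"
  have "is_dist (comp_actions k Ac) \<beta>"
    "\<And>th. exp_util (comp_actions k Ac) (comp_util k uc) th \<beta> = (\<Sum>l<k. exp_util (Ac l) (uc l) th (q l))"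
    unfolding \<beta>_def by (rule product_mixture[OF fin])+
  then have "(\<chi> th. \<Sum>l<k. exp_util (Ac l) (uc l) th (q l)) \<in> dominated (comp_actions k Ac) (comp_util k uc)"
    unfolding dominated_def by auto
  also have "\<dots> \<subseteq> Hset (comp_actions k Ac) (comp_util k uc)"
    using fin by (intro dominated_subset_Hset finite_comp_actions) simp
  also have "\<dots> \<subseteq> dominated A u"
    using wd Hset_eq_dominated[OF assms(1), of u] by (simp add: weak_decomposition_def)
  finally show ?thesis by (simp add: dominated_def)
qed

lemma sum_payoffs_le_Vjoint:
  assumes A: "finite A" and exps: "\<forall>j<m. is_experiment (Y j) (Pj j)"
    and wd: "weak_decomposition A u k Ac uc" and J: "\<forall>l<k. J l < m"
    and \<tau>: "\<forall>l<k. \<tau> l \<in> strategies (Y (J l)) (Ac l)"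
  shows "(\<Sum>l<k. expected_payoff (Ac l) (uc l) (Y (J l)) (Pj (J l)) (\<tau> l)) \<le> Vjoint A u m Y Pj"
proof -
  have finY: "\<And>j. j < m \<Longrightarrow> finite (Y j)" using exps by (simp add: is_experiment_def)
  define G where "G = (\<lambda>l th s. exp_util (Ac l) (uc l) th (\<tau> l s))"
  have "\<forall>ys\<in>profiles m Y. \<exists>\<alpha>. is_dist A \<alpha> \<and> (\<forall>th. (\<Sum>l<k. G l th (ys (J l))) \<le> exp_util A u th \<alpha>)"
    unfolding G_def using \<tau> J
    by (intro ballI weak_decomposition_dominates[OF A wd]) (auto simp: strategies_def profiles_memD)
  then obtain \<sigma> where \<sigma>: "\<forall>ys\<in>profiles m Y.
      is_dist A (\<sigma> ys) \<and> (\<forall>th. (\<Sum>l<k. G l th (ys (J l))) \<le> exp_util A u th (\<sigma> ys))"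
    by (rule bchoice[elim_format]) blast
  show ?thesis
  proof (rule Vjoint_ge[OF A finite_profiles[OF finY] product_coupling[OF exps]])
    show "\<sigma> \<in> strategies (profiles m Y) A" using \<sigma> by (simp add: strategies_def)
    fix P assume P: "P \<in> couplings m Y Pj"
    have "(\<Sum>l<k. expected_payoff (Ac l) (uc l) (Y (J l)) (Pj (J l)) (\<tau> l))
        = (\<Sum>th\<in>UNIV. \<Sum>l<k. \<Sum>s\<in>Y (J l). Pj (J l) th s * G l th s)"
      unfolding expected_payoff_def G_def by (rule sum.swap)
    also have "\<dots> = (\<Sum>th\<in>UNIV. \<Sum>l<k. \<Sum>ys\<in>profiles m Y. P th ys * G l th (ys (J l)))"
      using coupling_expectation[OF P] J finY by simp
    also have "\<dots> = (\<Sum>th\<in>UNIV. \<Sum>ys\<in>profiles m Y. P th ys * (\<Sum>l<k. G l th (ys (J l))))"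
      by (simp add: sum_distrib_left sum.swap[of _ "{..<k}"])
    also have "\<dots> \<le> expected_payoff A u (profiles m Y) P \<sigma>"
      unfolding expected_payoff_def using \<sigma> coupling_is_dist[OF P]
      by (intro sum_mono mult_left_mono) (auto simp: is_dist_def)
    finally show "(\<Sum>l<k. expected_payoff (Ac l) (uc l) (Y (J l)) (Pj (J l)) (\<tau> l))
        \<le> expected_payoff A u (profiles m Y) P \<sigma>" .
  qed
qed

lemma sum_Vsingle_le_Vjoint:
  assumes A: "finite A" and exps: "\<forall>j<m. is_experiment (Y j) (Pj j)"
    and wd: "weak_decomposition A u k Ac uc" and J: "\<forall>l<k. J l < m"
  shows "(\<Sum>l<k. Vsingle (Ac l) (uc l) (Y (J l)) (Pj (J l))) \<le> Vjoint A u m Y Pj"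
proof (rule field_le_epsilon)
  fix \<epsilon> :: real assume "0 < \<epsilon>"
  have "\<forall>l<k. \<exists>\<tau>\<in>strategies (Y (J l)) (Ac l).
      Vsingle (Ac l) (uc l) (Y (J l)) (Pj (J l)) - \<epsilon> / k
        < expected_payoff (Ac l) (uc l) (Y (J l)) (Pj (J l)) \<tau>"
    using wd \<open>0 < \<epsilon>\<close>
    by (intro allI impI Vsingle_approx) (auto simp: weak_decomposition_def decision_problem_def)
  then obtain \<tau> where \<tau>: "\<forall>l<k. \<tau> l \<in> strategies (Y (J l)) (Ac l)"
    and approx: "\<forall>l<k. Vsingle (Ac l) (uc l) (Y (J l)) (Pj (J l)) - \<epsilon> / k
      < expected_payoff (Ac l) (uc l) (Y (J l)) (Pj (J l)) (\<tau> l)"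
    by metis
  have "(\<Sum>l<k. Vsingle (Ac l) (uc l) (Y (J l)) (Pj (J l)))
      \<le> (\<Sum>l<k. expected_payoff (Ac l) (uc l) (Y (J l)) (Pj (J l)) (\<tau> l) + \<epsilon> / k)"
    using approx by (intro sum_mono) (simp add: less_imp_le algebra_simps)
  also have "\<dots> \<le> (\<Sum>l<k. expected_payoff (Ac l) (uc l) (Y (J l)) (Pj (J l)) (\<tau> l)) + \<epsilon>"
    using \<open>0 < \<epsilon>\<close> by (simp add: sum.distrib)
  also have "\<dots> \<le> Vjoint A u m Y Pj + \<epsilon>"
    using sum_payoffs_le_Vjoint[OF A exps wd J \<tau>] by simp
  finally show "(\<Sum>l<k. Vsingle (Ac l) (uc l) (Y (J l)) (Pj (J l))) \<le> Vjoint A u m Y Pj + \<epsilon>" .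
qed

lemma sum_Max_Vsingle_le_Vjoint:
  assumes A: "finite A" and m: "m \<ge> 1" and exps: "\<forall>j<m. is_experiment (Y j) (Pj j)"
    and wd: "weak_decomposition A u k Ac uc"
  shows "(\<Sum>l<k. Max ((\<lambda>j. Vsingle (Ac l) (uc l) (Y j) (Pj j)) ` {..<m})) \<le> Vjoint A u m Y Pj"
proof -
  define V where "V = (\<lambda>l j. Vsingle (Ac l) (uc l) (Y j) (Pj j))"
  have "\<forall>l. \<exists>j. j < m \<and> Max (V l ` {..<m}) = V l j"
  proof
    fix l
    have "Max (V l ` {..<m}) \<in> V l ` {..<m}"
      using m by (intro Max_in) (auto simp: lessThan_empty_iff)
    then show "\<exists>j. j < m \<and> Max (V l ` {..<m}) = V l j" by auto
  qed
  then obtain J where "\<forall>l. J l < m \<and> Max (V l ` {..<m}) = V l (J l)" by metis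
  then show ?thesis
    using sum_Vsingle_le_Vjoint[OF A exps wd, of J] by (simp add: V_def)
qed

lemma weak_decompositionI:
  assumes "finite A" "\<forall>l<k. decision_problem (Ac l)"
    and "\<And>b. b \<in> comp_actions k Ac \<Longrightarrow> (\<chi> th. comp_util k uc th b) \<in> dominated A u"
  shows "weak_decomposition A u k Ac uc"
  using assms Hset_subset_dominated[of "comp_actions k Ac" "comp_util k uc" A u]
    dominated_subset_Hset[of A u] unfolding weak_decomposition_def by blast

lemma Vsingle_relabel_ge:
  assumes "bij_betw e B Y" "finite B" "is_experiment Y P"
  shows "(\<Sum>th\<in>UNIV. \<Sum>y\<in>Y. P th y * w th y) \<le> Vsingle B (\<lambda>th n. w th (e n)) Y P"
proof -
  define \<tau> where "\<tau> = (\<lambda>y n. if n = inv_into B e y then 1 else (0::real))"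
  have inv: "inv_into B e y \<in> B" "e (inv_into B e y) = y" if "y \<in> Y" for y
    using assms(1) that by (auto simp: bij_betw_def inv_into_into f_inv_into_f)
  have "\<tau> \<in> strategies Y B"
    using inv assms(2) by (auto simp: strategies_def is_dist_def \<tau>_def)
  moreover have "expected_payoff B (\<lambda>th n. w th (e n)) Y P \<tau> = (\<Sum>th\<in>UNIV. \<Sum>y\<in>Y. P th y * w th y)"
    unfolding expected_payoff_def exp_util_def \<tau>_def
    using inv assms(2) by (intro sum.cong refl) (simp add: if_distrib[of "\<lambda>v. v * _"] cong: if_cong)
  ultimately show ?thesis
    using expected_payoff_le_Vsingle[OF assms(2,3)] by metis
qed

lemma separable_minorant_weak_decomposition:
  fixes w :: "nat \<Rightarrow> 'th::finite \<Rightarrow> 'y \<Rightarrow> real"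
  assumes A: "finite A" and exps: "\<forall>j<m. is_experiment (Y j) (Pj j)"
    and \<sigma>: "\<sigma> \<in> strategies (profiles m Y) A"
    and dom: "\<forall>th. \<forall>ys\<in>profiles m Y. (\<Sum>j<m. w j th (ys j)) \<le> exp_util A u th (\<sigma> ys)"
  shows "\<exists>(Ac :: nat \<Rightarrow> nat set) uc. weak_decomposition A u m Ac uc \<and>
    (\<forall>l<m. (\<Sum>th\<in>UNIV. \<Sum>y\<in>Y l. Pj l th y * w l th y) \<le> Vsingle (Ac l) (uc l) (Y l) (Pj l))"
proof -
  have "\<forall>l. \<exists>e. l < m \<longrightarrow> bij_betw e {0..<card (Y l)} (Y l)"
    using exps ex_bij_betw_nat_finite by (auto simp: is_experiment_def)
  then obtain e where e: "\<And>l. l < m \<Longrightarrow> bij_betw (e l) {0..<card (Y l)} (Y l)" by metis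
  define Ac :: "nat \<Rightarrow> nat set" where "Ac = (\<lambda>l. {0..<card (Y l)})"
  define uc where "uc = (\<lambda>l th n. w l th (e l n))"
  have "decision_problem (Ac l)" if "l < m" for l
    using exps that is_dist_nonempty by (auto simp: decision_problem_def Ac_def is_experiment_def)
  moreover have "(\<chi> th. comp_util m uc th b) \<in> dominated A u" if b: "b \<in> comp_actions m Ac" for b
  proof -
    define ys where "ys = (\<lambda>l. if l < m then e l (b l) else undefined)"
    have "e l (b l) \<in> Y l" if "l < m" for l
      using b e[OF that] that by (auto simp: comp_actions_def Ac_def bij_betw_def)
    then have ys: "ys \<in> profiles m Y"
      by (auto simp: ys_def profiles_def PiE_iff extensional_def)
    have "comp_util m uc th b = (\<Sum>j<m. w j th (ys j))" for th
      by (simp add: comp_util_def uc_def ys_def)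
    then show ?thesis
      using dom ys \<sigma> by (auto simp: dominated_def strategies_def)
  qed
  ultimately have "weak_decomposition A u m Ac uc" using A by (intro weak_decompositionI) auto
  moreover have "(\<Sum>th\<in>UNIV. \<Sum>y\<in>Y l. Pj l th y * w l th y) \<le> Vsingle (Ac l) (uc l) (Y l) (Pj l)"
    if "l < m" for l
    using Vsingle_relabel_ge[OF e[OF that], of "Pj l" "w l"] exps that by (simp add: Ac_def uc_def)
  ultimately show ?thesis by blast
qed

theorem theorem3:
  fixes A :: "'a set" and u :: "'th::finite \<Rightarrow> 'a \<Rightarrow> real"
    and m :: nat and Y :: "nat \<Rightarrow> 'y set" and Pj :: "nat \<Rightarrow> 'th \<Rightarrow> 'y \<Rightarrow> real"
  assumes "decision_problem A"
    and "m \<ge> 1"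
    and "\<forall>j<m. is_experiment (Y j) (Pj j)"
  shows "\<exists>k\<ge>1. \<exists>(Ac :: nat \<Rightarrow> nat set) (uc :: nat \<Rightarrow> 'th \<Rightarrow> nat \<Rightarrow> real).
           weak_decomposition A u k Ac uc \<and>
           Vjoint A u m Y Pj = (\<Sum>l<k. Max ((\<lambda>j. Vsingle (Ac l) (uc l) (Y j) (Pj j)) ` {..<m}))"
proof -
  have A: "finite A" using assms(1) by (simp add: decision_problem_def)
  obtain w \<sigma> where \<sigma>: "\<sigma> \<in> strategies (profiles m Y) A"
    and dom: "\<forall>th. \<forall>ys\<in>profiles m Y. (\<Sum>j<m. w j th (ys j)) \<le> exp_util A u th (\<sigma> ys)"
    and V: "Vjoint A u m Y Pj \<le> (\<Sum>j<m. \<Sum>th\<in>UNIV. \<Sum>y\<in>Y j. Pj j th y * w j th y)"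
    using Vjoint_separable_minorant[OF assms] by blast
  obtain Ac :: "nat \<Rightarrow> nat set" and uc where wd: "weak_decomposition A u m Ac uc"
    and w: "\<forall>l<m. (\<Sum>th\<in>UNIV. \<Sum>y\<in>Y l. Pj l th y * w l th y) \<le> Vsingle (Ac l) (uc l) (Y l) (Pj l)"
    using separable_minorant_weak_decomposition[OF A assms(3) \<sigma> dom] by blast
  have "Vsingle (Ac l) (uc l) (Y l) (Pj l) \<le> Max ((\<lambda>j. Vsingle (Ac l) (uc l) (Y j) (Pj j)) ` {..<m})"
    if "l < m" for l
    using that by (intro Max_ge) auto
  then have "Vjoint A u m Y Pj \<le> (\<Sum>l<m. Max ((\<lambda>j. Vsingle (Ac l) (uc l) (Y j) (Pj j)) ` {..<m}))"
    using w by (intro order_trans[OF V] sum_mono) (auto intro: order_trans)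
  moreover have "(\<Sum>l<m. Max ((\<lambda>j. Vsingle (Ac l) (uc l) (Y j) (Pj j)) ` {..<m})) \<le> Vjoint A u m Y Pj"
    using sum_Max_Vsingle_le_Vjoint[OF A assms(2,3) wd] .
  ultimately show ?thesis using assms(2) wd by (intro exI[of _ m] exI conjI) auto
qed

end
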